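(* Let $X=\{0,1\}^{\mathbb Z}$, $\mu=(\tfrac12,\tfrac12)^{\mathbb Z}$, $T$ the two-sided shift, and $d(x,x')=\sum_{k\in\mathbb Z}2^{-|k|-2}|x_k-x'_k|$. Consider $\mathbf X=\mathbf Y=(X,d,\mu,T)$ and choose dense anchor families in $X$ whose first anchor, in both coordinates, is the all-zero sequence $0^\infty$. Then for every $p\ge1$, $\widetilde{\mathrm{Dep}}_{1,1,1,p}(\mathbf X,\mathbf Y)>0$.
   Context: $\mathcal J(T,T)$: Borel probability measures on $X\times X$ with both marginals $\mu$ invariant under $T\times T$. With anchors $(a_r)$, $(b_r)$, for $z_i=(x_i,y_i)$: $\widetilde{\mathcal D}^X_{n,m,R}=\bigl((d(T^ax_i,T^bx_j))_{1\le i,j\le n,0\le a,b<m},(d(T^ax_i,a_r))_{1\le i\le n,0\le a<m,1\le r\le R}\bigr)$, $\widetilde{\mathcal D}^Y_{n,m,R}$ analogously with $y_i$ and $b_r$, $\widetilde\Phi_{n,m,R}(\lambda)=\mathrm{Law}_{\lambda^{\otimes n}}(\widetilde{\mathcal D}^X_{n,m,R},\widetilde{\mathcal D}^Y_{n,m,R})$, and $\widetilde{\mathrm{Dep}}_{n,m,R,p}(\mathbf X,\mathbf Y)=\sup_{\lambda\in\mathcal J(T,T)}W_p(\widetilde\Phi_{n,m,R}(\lambda),\widetilde\Phi_{n,m,R}(\mu\otimes\mu))$, where $W_p$ is the $p$-Wasserstein distance on the finite array cube with a fixed product Euclidean metric. *)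

theory Defs
  imports "HOL-Probability.Probability"
begin

type_synonym bseq = "int \<Rightarrow> bool"

definition bern_meas :: "bseq measure" where
  "bern_meas = PiM UNIV (\<lambda>_::int. measure_pmf (bernoulli_pmf (1/2)))"

definition shift :: "bseq \<Rightarrow> bseq" where
  "shift x = (\<lambda>k. x (k + 1))"

definition cantor_dist :: "bseq \<Rightarrow> bseq \<Rightarrow> real" where
  "cantor_dist x x' = infsum (\<lambda>k::int. 2 powr (- \<bar>real_of_int k\<bar> - 2)
        * \<bar>(of_bool (x k) :: real) - of_bool (x' k)\<bar>) UNIV"

definition dense_anchors :: "('a \<Rightarrow> 'a \<Rightarrow> real) \<Rightarrow> (nat \<Rightarrow> 'a) \<Rightarrow> bool" where
  "dense_anchors d a \<longleftrightarrow> (\<forall>x \<epsilon>. \<epsilon> > 0 \<longrightarrow> (\<exists>r\<ge>1. d x (a r) < \<epsilon>))"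

definition joinings :: "'a measure \<Rightarrow> ('a \<Rightarrow> 'a) \<Rightarrow> ('a \<times> 'a) measure set" where
  "joinings M T = {l. prob_space l \<and> sets l = sets (M \<Otimes>\<^sub>M M)
      \<and> distr l M fst = M \<and> distr l M snd = M
      \<and> distr l (M \<Otimes>\<^sub>M M) (map_prod T T) = l}"

text \<open>Index set of one array D_{n,m,R}: keys [0,i,j,a,b] for d(T^a x_i, T^b x_j) and
  [1,i,a,r] for d(T^a x_i, a_r) (indices i,j shifted to start at 0, a,b < m, 1<=r<=R).\<close>
definition Dkeys :: "nat \<Rightarrow> nat \<Rightarrow> nat \<Rightarrow> nat list set" where
  "Dkeys n m R = {[0,i,j,a,b] | i j a b. i < n \<and> j < n \<and> a < m \<and> b < m}
      \<union> {[1,i,a,r] | i a r. i < n \<and> a < m \<and> 1 \<le> r \<and> r \<le> R}"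

text \<open>Keys of the pair (D^X, D^Y): prefix 0 for the X-array, 1 for the Y-array.\<close>
definition arr_keys :: "nat \<Rightarrow> nat \<Rightarrow> nat \<Rightarrow> nat list set" where
  "arr_keys n m R = {s # k | s k. s < 2 \<and> k \<in> Dkeys n m R}"

definition Dfeat :: "('a \<Rightarrow> 'a \<Rightarrow> real) \<Rightarrow> ('a \<Rightarrow> 'a) \<Rightarrow> (nat \<Rightarrow> 'a) \<Rightarrow> (nat \<Rightarrow> 'a)
    \<Rightarrow> nat list \<Rightarrow> real" where
  "Dfeat d T anc x k =
     (if k ! 0 = 0 then d ((T ^^ (k ! 3)) (x (k ! 1))) ((T ^^ (k ! 4)) (x (k ! 2)))
      else d ((T ^^ (k ! 2)) (x (k ! 1))) (anc (k ! 3)))"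

definition Phi_tilde :: "('a \<Rightarrow> 'a \<Rightarrow> real) \<Rightarrow> ('a \<Rightarrow> 'a) \<Rightarrow> (nat \<Rightarrow> 'a) \<Rightarrow> (nat \<Rightarrow> 'a)
    \<Rightarrow> nat \<Rightarrow> nat \<Rightarrow> nat \<Rightarrow> ('a \<times> 'a) measure \<Rightarrow> (nat list \<Rightarrow> real) measure" where
  "Phi_tilde d T a b n m R l =
     distr (PiM {..<n} (\<lambda>_. l)) (PiM (arr_keys n m R) (\<lambda>_. borel))
       (\<lambda>z. \<lambda>k\<in>arr_keys n m R.
           if hd k = 0 then Dfeat d T a (fst \<circ> z) (tl k) else Dfeat d T b (snd \<circ> z) (tl k))"

definition eucl_dist :: "nat list set \<Rightarrow> (nat list \<Rightarrow> real) \<Rightarrow> (nat list \<Rightarrow> real) \<Rightarrow> real" where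
  "eucl_dist K u v = sqrt (\<Sum>k\<in>K. (u k - v k)\<^sup>2)"

definition couplings :: "'b measure \<Rightarrow> 'b measure \<Rightarrow> ('b \<times> 'b) measure set" where
  "couplings P Q = {c. prob_space c \<and> sets c = sets (P \<Otimes>\<^sub>M Q)
      \<and> distr c P fst = P \<and> distr c Q snd = Q}"

definition wasserstein :: "('b \<Rightarrow> 'b \<Rightarrow> real) \<Rightarrow> real \<Rightarrow> 'b measure \<Rightarrow> 'b measure \<Rightarrow> ennreal" where
  "wasserstein \<rho> p P Q =
     (let w = (INF c\<in>couplings P Q. \<integral>\<^sup>+ z. ennreal (\<rho> (fst z) (snd z) powr p) \<partial>c)
      in if w = \<top> then \<top> else ennreal (enn2real w powr (1 / p)))"

definition Dep_tilde :: "'a measure \<Rightarrow> ('a \<Rightarrow> 'a) \<Rightarrow> ('a \<Rightarrow> 'a \<Rightarrow> real) \<Rightarrow> (nat \<Rightarrow> 'a)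
    \<Rightarrow> (nat \<Rightarrow> 'a) \<Rightarrow> nat \<Rightarrow> nat \<Rightarrow> nat \<Rightarrow> real \<Rightarrow> ennreal" where
  "Dep_tilde M T d a b n m R p =
     (SUP l\<in>joinings M T. wasserstein (eucl_dist (arr_keys n m R)) p
          (Phi_tilde d T a b n m R l) (Phi_tilde d T a b n m R (M \<Otimes>\<^sub>M M)))"

end

theory Submission
  imports Defs
begin

(* For n = m = R = 1 the arrays reduce to the two anchor distances d(x, 0^\<infinity>) and d(y, 0^\<infinity>)
   (the self-distances vanish). Under the diagonal self-joining x = y, so these two entries agree
   almost surely. Under \<mu> \<otimes> \<mu>, with probability 1/64 the sequence x is 1 and y is 0 at the
   coordinates -1, 0, 1, which forces d(x, 0^\<infinity>) \<ge> 1/2 and d(y, 0^\<infinity>) \<le> 1/4. A coupling of the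
   two laws must therefore transport this mass by Euclidean distance at least 1/8, so
   W_p \<ge> (1/8) (1/64)^(1/p) > 0. *)

definition cantor_weight :: "int \<Rightarrow> real" where
  "cantor_weight k = 2 powr (- \<bar>real_of_int k\<bar> - 2)"

lemma cantor_weight_eq_power: "cantor_weight k = (1/2) ^ (nat \<bar>k\<bar> + 2)"
proof -
  have "cantor_weight k = 2 powr - real (nat \<bar>k\<bar> + 2)"
    by (simp add: cantor_weight_def algebra_simps)
  also have "\<dots> = inverse (2 ^ (nat \<bar>k\<bar> + 2))"
    by (subst powr_minus, subst powr_realpow) auto
  finally show ?thesis
    by (simp add: power_one_over inverse_eq_divide)
qed

lemma cantor_weight_nonneg: "0 \<le> cantor_weight k"
  by (simp add: cantor_weight_def)

lemma has_sum_cantor_weight_positive: "(cantor_weight has_sum 1/4) (int ` {1..})"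
proof -
  have "((\<lambda>n::nat. 1/4 * (1/2::real) ^ n) has_sum 1/4 * ((1/2) / (1 - 1/2))) {1..}"
    by (intro has_sum_cmult_right has_sum_geometric_from_1) simp
  then have "((cantor_weight \<circ> int) has_sum 1/4) {1..}"
    by (simp add: cantor_weight_eq_power o_def power_add)
  then show ?thesis
    by (simp add: has_sum_reindex)
qed

lemma has_sum_cantor_weight: "(cantor_weight has_sum 3/4) UNIV"
proof -
  have "cantor_weight \<circ> uminus = cantor_weight"
    by (simp add: fun_eq_iff cantor_weight_def)
  then have "((cantor_weight \<circ> uminus) has_sum 1/4) (int ` {1..})"
    using has_sum_cantor_weight_positive by simp
  then have neg: "(cantor_weight has_sum 1/4) (uminus ` int ` {1..})"
    by (simp add: has_sum_reindex)
  have "(cantor_weight has_sum 1/4 + 1/4 + cantor_weight 0) (int ` {1..} \<union> uminus ` int ` {1..} \<union> {0})"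
    by (intro has_sum_Un_disjoint has_sum_cantor_weight_positive neg has_sum_finite[of "{0}", simplified]) auto
  moreover have "k \<in> int ` {1..} \<union> uminus ` int ` {1..} \<union> {0}" for k :: int
  proof -
    consider "1 \<le> k" | "k \<le> -1" | "k = 0"
      by linarith
    then show ?thesis
    proof cases
      case 1
      then show ?thesis by (intro UnI1 image_eqI[of _ _ "nat k"]) auto
    next
      case 2
      then show ?thesis by (intro UnI1 UnI2 image_eqI[of _ _ "int (nat (- k))"] imageI) auto
    qed simp
  qed
  then have "int ` {1..} \<union> uminus ` int ` {1..} \<union> {0} = UNIV"
    by blast
  ultimately show ?thesis
    by (simp add: cantor_weight_def powr_minus)
qed

lemma summable_on_cantor_weight: "cantor_weight summable_on A"
  by (meson has_sum_cantor_weight summable_on_def summable_on_subset_banach subset_UNIV)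

lemma cantor_dist_eq_infsum:
  "cantor_dist x y = infsum (\<lambda>k. cantor_weight k * of_bool (x k \<noteq> y k)) UNIV"
proof -
  have "\<bar>of_bool a - of_bool b\<bar> = (of_bool (a \<noteq> b) :: real)" for a b
    by (cases a; cases b) simp_all
  then show ?thesis
    unfolding cantor_dist_def cantor_weight_def by simp
qed

lemma summable_on_cantor_dist_terms:
  "(\<lambda>k. cantor_weight k * of_bool (x k \<noteq> y k)) summable_on A"
  by (rule summable_on_comparison_test[OF summable_on_cantor_weight])
     (auto simp: cantor_weight_nonneg)

lemma cantor_dist_ge_sum_weight:
  assumes "finite K" "\<forall>k\<in>K. x k \<noteq> y k"
  shows "sum cantor_weight K \<le> cantor_dist x y"
proof -
  have "sum cantor_weight K = infsum (\<lambda>k. cantor_weight k * of_bool (x k \<noteq> y k)) K"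
    using assms by simp
  also have "\<dots> \<le> cantor_dist x y"
    unfolding cantor_dist_eq_infsum
    by (intro infsum_mono_neutral summable_on_cantor_dist_terms)
       (auto simp: cantor_weight_nonneg)
  finally show ?thesis .
qed

lemma cantor_dist_le_diff_sum_weight:
  assumes "finite K" "\<forall>k\<in>K. x k = y k"
  shows "cantor_dist x y \<le> 3/4 - sum cantor_weight K"
proof -
  have "(cantor_weight has_sum 3/4 - sum cantor_weight K) (UNIV - K)"
    using assms(1) by (intro has_sum_Diff has_sum_cantor_weight has_sum_finite) auto
  moreover have "cantor_dist x y \<le> infsum cantor_weight (UNIV - K)"
    unfolding cantor_dist_eq_infsum
    by (intro infsum_mono_neutral summable_on_cantor_dist_terms summable_on_cantor_weight)
       (use assms(2) in \<open>auto simp: cantor_weight_nonneg\<close>)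
  ultimately show ?thesis
    by (simp add: infsumI)
qed

lemma sum_cantor_weight_centre: "sum cantor_weight {-1, 0, 1} = 1/2"
  by (simp add: cantor_weight_eq_power)

lemma cantor_dist_zero_ge_half: "\<forall>k\<in>{-1, 0, 1}. x k \<Longrightarrow> 1/2 \<le> cantor_dist x (\<lambda>_. False)"
  using cantor_dist_ge_sum_weight[of "{-1, 0, 1}" x] by (simp add: sum_cantor_weight_centre)

lemma cantor_dist_zero_le_quarter: "\<forall>k\<in>{-1, 0, 1}. \<not> x k \<Longrightarrow> cantor_dist x (\<lambda>_. False) \<le> 1/4"
  using cantor_dist_le_diff_sum_weight[of "{-1, 0, 1}" x] by (simp add: sum_cantor_weight_centre)

lemma prob_space_bern_meas: "prob_space bern_meas"
  unfolding bern_meas_def by (intro prob_space_PiM prob_space_measure_pmf)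

lemma space_bern_meas [simp]: "space bern_meas = UNIV"
  by (simp add: bern_meas_def space_PiM)

lemma measurable_bern_meas_component [measurable]:
  "(\<lambda>x. x k) \<in> measurable bern_meas (count_space UNIV)"
proof -
  have "(\<lambda>x. x k) \<in> measurable bern_meas (measure_pmf (bernoulli_pmf (1/2)))"
    unfolding bern_meas_def by (rule measurable_component_singleton) simp
  then show ?thesis
    by (simp add: measurable_cong_sets[OF refl sets_measure_pmf_count_space])
qed

(* Enumerating \<int> by int_decode turns the unordered sum into a series of measurable terms. *)
lemma borel_measurable_cantor_dist_left:
  "(\<lambda>x. cantor_dist x y) \<in> borel_measurable bern_meas"
proof -
  let ?f = "\<lambda>x k. cantor_weight k * of_bool (x k \<noteq> y k)"
  have "cantor_dist x y = (\<Sum>n. ?f x (int_decode n))" for x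
  proof -
    have "((\<lambda>n. ?f x (int_decode n)) has_sum cantor_dist x y) UNIV"
      using has_sum_reindex_bij_betw[OF bij_int_decode, of "?f x"]
        summable_on_cantor_dist_terms[of x y UNIV]
      by (simp add: cantor_dist_eq_infsum has_sum_infsum)
    then show ?thesis
      by (simp add: sums_unique has_sum_imp_sums)
  qed
  moreover have "(\<lambda>x. \<Sum>n. ?f x (int_decode n)) \<in> borel_measurable bern_meas"
    by measurable
  ultimately show ?thesis
    by simp
qed

lemma sets_bern_meas_cylinder:
  assumes "finite K"
  shows "{x. \<forall>k\<in>K. x k = v k} \<in> sets bern_meas"
proof -
  have "{x \<in> space bern_meas. \<forall>k\<in>K. x k = v k} \<in> sets bern_meas"
    using assms by measurable
  then show ?thesis
    by simp
qed

lemma emeasure_bern_meas_cylinder: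
  assumes "finite K"
  shows "emeasure bern_meas {x. \<forall>k\<in>K. x k = v k} = ennreal ((1/2) ^ card K)"
proof -
  interpret product_prob_space "\<lambda>_::int. measure_pmf (bernoulli_pmf (1/2))" UNIV
    by unfold_locales
  have "{x. \<forall>k\<in>K. x k = v k} = {x\<in>space bern_meas. \<forall>k\<in>K. x k \<in> {v k}}"
    by auto
  then have "emeasure bern_meas {x. \<forall>k\<in>K. x k = v k}
      = (\<Prod>k\<in>K. emeasure (measure_pmf (bernoulli_pmf (1/2))) {v k})"
    unfolding bern_meas_def using assms by (simp only:) (rule emeasure_PiM_Collect, auto)
  also have "\<dots> = (\<Prod>k\<in>K. ennreal (1/2))"
  proof (intro prod.cong refl)
    fix k
    show "emeasure (measure_pmf (bernoulli_pmf (1/2))) {v k} = ennreal (1/2)"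
      by (cases "v k") (simp_all add: emeasure_pmf_single)
  qed
  also have "\<dots> = ennreal (1/2) ^ card K"
    by (rule prod_constant)
  also have "\<dots> = ennreal ((1/2) ^ card K)"
    by (rule ennreal_power) simp
  finally show ?thesis .
qed

lemma measurable_shift: "shift \<in> measurable bern_meas bern_meas"
proof -
  have "(\<lambda>x. \<lambda>k. x (k + 1)) \<in> measurable bern_meas (PiM UNIV (\<lambda>_::int. measure_pmf (bernoulli_pmf (1/2))))"
  proof (rule measurable_PiM_single')
    fix k :: int
    show "(\<lambda>x. x (k + 1)) \<in> measurable bern_meas (measure_pmf (bernoulli_pmf (1/2)))"
      unfolding bern_meas_def by (rule measurable_component_singleton) simp
  qed (simp add: space_PiM)
  then show ?thesis
    by (simp add: shift_def[abs_def] bern_meas_def[symmetric])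
qed

lemma distr_shift_bern_meas: "distr bern_meas bern_meas shift = bern_meas"
proof -
  have "distr bern_meas (PiM UNIV (\<lambda>k::int. (\<lambda>_. measure_pmf (bernoulli_pmf (1/2))) (k + 1)))
      (\<lambda>x. \<lambda>k\<in>UNIV. x (k + 1)) = PiM UNIV (\<lambda>k. (\<lambda>_. measure_pmf (bernoulli_pmf (1/2))) (k + 1))"
    unfolding bern_meas_def
    by (rule distr_PiM_reindex) (auto simp: prob_space_measure_pmf inj_on_def)
  moreover have "(\<lambda>x::bseq. \<lambda>k\<in>UNIV. x (k + 1)) = shift"
    by (simp add: shift_def fun_eq_iff)
  ultimately show ?thesis
    by (simp add: bern_meas_def)
qed

definition diagonal_measure :: "'a measure \<Rightarrow> ('a \<times> 'a) measure" where
  "diagonal_measure M = distr M (M \<Otimes>\<^sub>M M) (\<lambda>x. (x, x))"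

lemma diagonal_in_joinings:
  assumes "prob_space M" and T [measurable]: "T \<in> measurable M M" and "distr M M T = M"
  shows "diagonal_measure M \<in> joinings M T"
proof -
  interpret prob_space M by fact
  have [measurable]: "(\<lambda>x. (x, x)) \<in> measurable M (M \<Otimes>\<^sub>M M)"
    by measurable
  have "map_prod T T \<in> measurable (M \<Otimes>\<^sub>M M) (M \<Otimes>\<^sub>M M)"
    unfolding map_prod_def by measurable
  then have "distr (distr M (M \<Otimes>\<^sub>M M) (\<lambda>x. (x, x))) (M \<Otimes>\<^sub>M M) (map_prod T T)
      = distr (distr M M T) (M \<Otimes>\<^sub>M M) (\<lambda>x. (x, x))"
    by (simp add: distr_distr comp_def)
  then show ?thesis
    using assms(3)
    by (auto simp: joinings_def diagonal_measure_def prob_space_distr distr_distr comp_def distr_id)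
qed

lemma eucl_dist_ge_half_gap:
  assumes "finite K" "i \<in> K" "j \<in> K" "i \<noteq> j" "u i = u j" "0 \<le> \<delta>" "\<delta> \<le> v i - v j"
  shows "\<delta> / 2 \<le> eucl_dist K u v"
proof -
  have "2 * ((u i - v i)\<^sup>2 + (u j - v j)\<^sup>2) = (2 * u i - v i - v j)\<^sup>2 + (v i - v j)\<^sup>2"
    using assms(5) by (simp add: power2_eq_square algebra_simps)
  moreover have "\<delta>\<^sup>2 \<le> (v i - v j)\<^sup>2"
    using assms(6,7) by (intro power_mono) auto
  ultimately have "\<delta>\<^sup>2 \<le> 4 * ((u i - v i)\<^sup>2 + (u j - v j)\<^sup>2)"
    using zero_le_power2[of "2 * u i - v i - v j"] zero_le_power2[of \<delta>] by linarith
  then have "(\<delta> / 2)\<^sup>2 \<le> (u i - v i)\<^sup>2 + (u j - v j)\<^sup>2"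
    by (simp add: power_divide)
  also have "\<dots> = (\<Sum>k\<in>{i, j}. (u k - v k)\<^sup>2)"
    using assms(4) by simp
  also have "\<dots> \<le> (\<Sum>k\<in>K. (u k - v k)\<^sup>2)"
    using assms(1-3) by (intro sum_mono2) auto
  finally show ?thesis
    unfolding eucl_dist_def by (rule real_le_rsqrt)
qed

lemma nn_integral_coupling_ge_if_separated:
  fixes \<rho> :: "'b \<Rightarrow> 'b \<Rightarrow> real"
  assumes "c \<in> couplings P Q"
    and A: "A \<in> sets P" "emeasure P A = 0" and B: "B \<in> sets Q"
    and separated: "\<And>u v. u \<in> space P - A \<Longrightarrow> v \<in> B \<Longrightarrow> \<delta> \<le> \<rho> u v"
    and "0 \<le> \<delta>" "0 \<le> p"
  shows "ennreal (\<delta> powr p) * emeasure Q B \<le> \<integral>\<^sup>+ z. ennreal (\<rho> (fst z) (snd z) powr p) \<partial>c"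
proof -
  have sets_c: "sets c = sets (P \<Otimes>\<^sub>M Q)" and marginals: "distr c P fst = P" "distr c Q snd = Q"
    using assms(1) by (auto simp: couplings_def)
  have fst: "fst \<in> measurable c P" and snd: "snd \<in> measurable c Q"
    by (simp_all add: measurable_cong_sets[OF sets_c refl])
  define G where "G = (snd -` B \<inter> space c) - (fst -` A \<inter> space c)"
  have null: "fst -` A \<inter> space c \<in> null_sets c"
    using emeasure_distr[OF fst A(1)] A measurable_sets[OF fst A(1)] by (simp add: marginals null_sets_def)
  have "emeasure c G = emeasure Q B"
    using emeasure_Diff_null_set[OF null measurable_sets[OF snd B]] emeasure_distr[OF snd B]
    by (simp add: G_def marginals)
  then have "ennreal (\<delta> powr p) * emeasure Q B = \<integral>\<^sup>+ z. ennreal (\<delta> powr p) * indicator G z \<partial>c"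
    using measurable_sets[OF fst A(1)] measurable_sets[OF snd B]
    by (simp add: G_def nn_integral_cmult_indicator)
  also have "\<dots> \<le> \<integral>\<^sup>+ z. ennreal (\<rho> (fst z) (snd z) powr p) \<partial>c"
  proof (rule nn_integral_mono)
    fix z
    assume "z \<in> space c"
    then have "fst z \<in> space P"
      using sets_eq_imp_space_eq[OF sets_c] by (auto simp: space_pair_measure)
    then have "z \<in> G \<Longrightarrow> \<delta> powr p \<le> \<rho> (fst z) (snd z) powr p"
      using separated \<open>0 \<le> \<delta>\<close> \<open>0 \<le> p\<close> by (intro powr_mono2) (auto simp: G_def)
    then show "ennreal (\<delta> powr p) * indicator G z \<le> ennreal (\<rho> (fst z) (snd z) powr p)"
      by (cases "z \<in> G") (simp_all add: ennreal_leI)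
  qed
  finally show ?thesis .
qed

lemma wasserstein_pos_if_separated:
  fixes \<rho> :: "'b \<Rightarrow> 'b \<Rightarrow> real"
  assumes A: "A \<in> sets P" "emeasure P A = 0"
    and B: "B \<in> sets Q" "0 < emeasure Q B"
    and separated: "\<And>u v. u \<in> space P - A \<Longrightarrow> v \<in> B \<Longrightarrow> \<delta> \<le> \<rho> u v"
    and "0 < \<delta>" "0 < p"
  shows "0 < wasserstein \<rho> p P Q"
proof -
  let ?w = "INF c\<in>couplings P Q. \<integral>\<^sup>+ z. ennreal (\<rho> (fst z) (snd z) powr p) \<partial>c"
  have "0 < ennreal (\<delta> powr p) * emeasure Q B"
    using B(2) \<open>0 < \<delta>\<close> by (simp add: ennreal_zero_less_mult_iff)
  also have "\<dots> \<le> ?w"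
    using assms by (intro INF_greatest nn_integral_coupling_ge_if_separated) auto
  finally have "0 < ?w" .
  show ?thesis
  proof (cases "?w = \<top>")
    case False
    with \<open>0 < ?w\<close> have "0 < enn2real ?w"
      by (metis enn2real_positive_iff less_top)
    with False show ?thesis
      by (simp add: wasserstein_def)
  qed (simp add: wasserstein_def)
qed

lemma arr_keys_1_1_1:
  "arr_keys 1 1 1 = {[0,0,0,0,0,0], [0,1,0,0,1], [1,0,0,0,0,0], [1,1,0,0,1]}"
proof -
  have "Dkeys 1 1 1 = {[0,0,0,0,0], [1,0,0,1]}"
    unfolding Dkeys_def by auto
  moreover have "s < 2 \<longleftrightarrow> s = 0 \<or> s = (1::nat)" for s
    by auto
  ultimately show ?thesis
    unfolding arr_keys_def by blast
qed

(* The pair (D^X, D^Y) for n = m = R = 1: key [0,1,0,0,1] carries d(x, a_1), key [1,1,0,0,1]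
   carries d(y, b_1), and the remaining keys carry the vanishing self-distances d(x, x), d(y, y). *)
definition anchor_distance_array :: "('a \<Rightarrow> 'a \<Rightarrow> real) \<Rightarrow> 'a \<Rightarrow> 'a \<Rightarrow> 'a \<times> 'a \<Rightarrow> nat list \<Rightarrow> real" where
  "anchor_distance_array d a1 b1 w = (\<lambda>k\<in>arr_keys 1 1 1.
     if k = [0,1,0,0,1] then d (fst w) a1 else if k = [1,1,0,0,1] then d (snd w) b1 else 0)"

lemma Dfeat_array_1_1_1:
  assumes "\<And>x. d x x = 0"
  shows "(\<lambda>k\<in>arr_keys 1 1 1. if hd k = 0 then Dfeat d T a (fst \<circ> z) (tl k) else Dfeat d T b (snd \<circ> z) (tl k))
    = anchor_distance_array d (a 1) (b 1) (z 0)"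
proof
  fix k
  show "(\<lambda>k\<in>arr_keys 1 1 1. if hd k = 0 then Dfeat d T a (fst \<circ> z) (tl k) else Dfeat d T b (snd \<circ> z) (tl k)) k
      = anchor_distance_array d (a 1) (b 1) (z 0) k"
  proof (cases "k \<in> arr_keys 1 1 1")
    case True
    then have "k \<in> {[0,0,0,0,0,0], [0,1,0,0,1], [1,0,0,0,0,0], [1,1,0,0,1]}"
      by (simp only: arr_keys_1_1_1)
    then show ?thesis
      unfolding anchor_distance_array_def restrict_apply'[OF True]
      by (elim insertE emptyE) (simp_all add: Dfeat_def assms)
  qed (simp add: anchor_distance_array_def)
qed

lemma anchor_distance_array_X: "anchor_distance_array d a1 b1 w [0,1,0,0,1] = d (fst w) a1"
  unfolding anchor_distance_array_def arr_keys_1_1_1 by simp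

lemma anchor_distance_array_Y: "anchor_distance_array d a1 b1 w [1,1,0,0,1] = d (snd w) b1"
  unfolding anchor_distance_array_def arr_keys_1_1_1 by simp

lemma measurable_anchor_distance_array:
  assumes "(\<lambda>w. d (fst w) a1) \<in> borel_measurable l" "(\<lambda>w. d (snd w) b1) \<in> borel_measurable l"
  shows "anchor_distance_array d a1 b1 \<in> measurable l (PiM (arr_keys 1 1 1) (\<lambda>_. borel))"
  using assms unfolding anchor_distance_array_def by measurable

lemma Phi_tilde_1_1_1:
  assumes "prob_space l"
    and G: "anchor_distance_array d (a 1) (b 1) \<in> measurable l (PiM (arr_keys 1 1 1) (\<lambda>_. borel))"
    and "\<And>x. d x x = 0"
  shows "Phi_tilde d T a b 1 1 1 l
    = distr l (PiM (arr_keys 1 1 1) (\<lambda>_. borel)) (anchor_distance_array d (a 1) (b 1))"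
proof -
  have "(\<lambda>z. z 0) \<in> measurable (PiM {..<1::nat} (\<lambda>_. l)) l"
    by (rule measurable_component_singleton) simp
  then have "Phi_tilde d T a b 1 1 1 l
      = distr (distr (PiM {..<1::nat} (\<lambda>_. l)) l (\<lambda>z. z 0)) (PiM (arr_keys 1 1 1) (\<lambda>_. borel))
          (anchor_distance_array d (a 1) (b 1))"
    unfolding Phi_tilde_def Dfeat_array_1_1_1[OF assms(3)] by (simp only: distr_distr[OF G] comp_def)
  also have "distr (PiM {..<1::nat} (\<lambda>_. l)) l (\<lambda>z. z 0) = l"
    using assms(1) by (intro distr_PiM_component) auto
  finally show ?thesis .
qed

lemma sets_Phi_tilde: "sets (Phi_tilde d T a b n m R l) = sets (PiM (arr_keys n m R) (\<lambda>_. borel))"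
  by (simp add: Phi_tilde_def)

lemma measurable_anchor_component_X [measurable]:
  "(\<lambda>u. u [0,1,0,0,1]) \<in> borel_measurable (PiM (arr_keys 1 1 1) (\<lambda>_. borel))"
  by (rule measurable_component_singleton) (unfold arr_keys_1_1_1, simp)

lemma measurable_anchor_component_Y [measurable]:
  "(\<lambda>u. u [1,1,0,0,1]) \<in> borel_measurable (PiM (arr_keys 1 1 1) (\<lambda>_. borel))"
  by (rule measurable_component_singleton) (unfold arr_keys_1_1_1, simp)

lemma measurable_cantor_anchor_distance_array:
  assumes "sets l = sets (bern_meas \<Otimes>\<^sub>M bern_meas)"
  shows "anchor_distance_array cantor_dist y z \<in> measurable l (PiM (arr_keys 1 1 1) (\<lambda>_. borel))"
proof (rule measurable_anchor_distance_array)
  have "fst \<in> measurable l bern_meas" "snd \<in> measurable l bern_meas"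
    by (simp_all add: measurable_cong_sets[OF assms refl])
  then show "(\<lambda>w. cantor_dist (fst w) y) \<in> borel_measurable l"
    and "(\<lambda>w. cantor_dist (snd w) z) \<in> borel_measurable l"
    by (auto intro: measurable_compose[OF _ borel_measurable_cantor_dist_left])
qed

lemma Phi_tilde_cantor_1_1_1:
  assumes "prob_space l" "sets l = sets (bern_meas \<Otimes>\<^sub>M bern_meas)"
  shows "Phi_tilde cantor_dist shift a b 1 1 1 l
    = distr l (PiM (arr_keys 1 1 1) (\<lambda>_. borel)) (anchor_distance_array cantor_dist (a 1) (b 1))"
  using assms by (intro Phi_tilde_1_1_1 measurable_cantor_anchor_distance_array) (simp_all add: cantor_dist_def)

lemma emeasure_Phi_tilde_diagonal:
  assumes "a 1 = b 1"
  shows "emeasure (Phi_tilde cantor_dist shift a b 1 1 1 (diagonal_measure bern_meas))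
    {u \<in> space (PiM (arr_keys 1 1 1) (\<lambda>_. borel)). u [0,1,0,0,1] \<noteq> u [1,1,0,0,1]} = 0"
    (is "emeasure _ ?E = 0")
proof -
  let ?K = "PiM (arr_keys 1 1 1) (\<lambda>_. borel :: real measure)"
  let ?G = "anchor_distance_array cantor_dist (a 1) (b 1)"
  have diag: "(\<lambda>x. (x, x)) \<in> measurable bern_meas (bern_meas \<Otimes>\<^sub>M bern_meas)"
    by measurable
  have G: "?G \<in> measurable (bern_meas \<Otimes>\<^sub>M bern_meas) ?K"
    by (intro measurable_cantor_anchor_distance_array) simp
  have "Phi_tilde cantor_dist shift a b 1 1 1 (diagonal_measure bern_meas) = distr (diagonal_measure bern_meas) ?K ?G"
    unfolding diagonal_measure_def using diag
    by (intro Phi_tilde_cantor_1_1_1 prob_space.prob_space_distr prob_space_bern_meas) simp_all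
  also have "\<dots> = distr bern_meas ?K (?G \<circ> (\<lambda>x. (x, x)))"
    unfolding diagonal_measure_def using G by (intro distr_distr diag) simp
  finally have Phi: "Phi_tilde cantor_dist shift a b 1 1 1 (diagonal_measure bern_meas)
      = distr bern_meas ?K (?G \<circ> (\<lambda>x. (x, x)))" .
  have diag_eq: "?G (x, x) [0,1,0,0,1] = ?G (x, x) [1,1,0,0,1]" for x
    using assms by (simp only: anchor_distance_array_X anchor_distance_array_Y fst_conv snd_conv)
  have "?E \<in> sets ?K"
    by (intro borel_measurable_neq measurable_anchor_component_X measurable_anchor_component_Y)
  then have "emeasure (Phi_tilde cantor_dist shift a b 1 1 1 (diagonal_measure bern_meas)) ?E
      = emeasure bern_meas ((?G \<circ> (\<lambda>x. (x, x))) -` ?E \<inter> space bern_meas)"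
    unfolding Phi by (rule emeasure_distr[OF measurable_comp[OF diag G]])
  also have "(?G \<circ> (\<lambda>x. (x, x))) -` ?E \<inter> space bern_meas = {}"
    using diag_eq by auto
  finally show ?thesis
    by simp
qed

lemma emeasure_Phi_tilde_product:
  assumes "a 1 = (\<lambda>_. False)" "b 1 = (\<lambda>_. False)"
  shows "ennreal (1/64) \<le> emeasure (Phi_tilde cantor_dist shift a b 1 1 1 (bern_meas \<Otimes>\<^sub>M bern_meas))
    {u \<in> space (PiM (arr_keys 1 1 1) (\<lambda>_. borel)). 1/4 \<le> u [0,1,0,0,1] - u [1,1,0,0,1]}"
    (is "_ \<le> emeasure _ ?E")
proof -
  let ?B = "bern_meas \<Otimes>\<^sub>M bern_meas"
  let ?K = "PiM (arr_keys 1 1 1) (\<lambda>_. borel :: real measure)"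
  let ?G = "anchor_distance_array cantor_dist (a 1) (b 1)"
  define C where "C = {x::bseq. \<forall>k\<in>{-1, 0, 1}. x k = True}"
  define D where "D = {x::bseq. \<forall>k\<in>{-1, 0, 1}. x k = False}"
  interpret bern: prob_space bern_meas
    by (rule prob_space_bern_meas)
  have G: "?G \<in> measurable ?B ?K"
    by (intro measurable_cantor_anchor_distance_array) simp
  have E: "?E \<in> sets ?K"
    by measurable
  have Phi: "Phi_tilde cantor_dist shift a b 1 1 1 ?B = distr ?B ?K ?G"
    by (intro Phi_tilde_cantor_1_1_1 prob_space_pair bern.prob_space_axioms) simp
  have C: "C \<in> sets bern_meas" and D: "D \<in> sets bern_meas"
    unfolding C_def D_def by (intro sets_bern_meas_cylinder; simp)+
  have "ennreal (1/64) = emeasure bern_meas C * emeasure bern_meas D"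
    using emeasure_bern_meas_cylinder[of "{-1, 0, 1}" "\<lambda>_. True"]
      emeasure_bern_meas_cylinder[of "{-1, 0, 1}" "\<lambda>_. False"]
    by (simp add: C_def D_def ennreal_mult[symmetric])
  also have "\<dots> = emeasure ?B (C \<times> D)"
    by (rule bern.emeasure_pair_measure_Times[symmetric, OF C D])
  also have "\<dots> \<le> emeasure ?B (?G -` ?E \<inter> space ?B)"
  proof (rule emeasure_mono)
    show "?G -` ?E \<inter> space ?B \<in> sets ?B"
      by (rule measurable_sets[OF G E])
    show "C \<times> D \<subseteq> ?G -` ?E \<inter> space ?B"
    proof clarify
      fix x y
      assume "x \<in> C" "y \<in> D"
      then have "1/2 \<le> cantor_dist x (\<lambda>_. False)" "cantor_dist y (\<lambda>_. False) \<le> 1/4"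
        by (intro cantor_dist_zero_ge_half cantor_dist_zero_le_quarter; simp add: C_def D_def)+
      moreover have "?G (x, y) \<in> space ?K"
        using measurable_space[OF G] by (simp add: space_pair_measure)
      moreover have "?G (x, y) [0,1,0,0,1] - ?G (x, y) [1,1,0,0,1]
          = cantor_dist x (\<lambda>_. False) - cantor_dist y (\<lambda>_. False)"
        using assms by (simp only: anchor_distance_array_X anchor_distance_array_Y fst_conv snd_conv)
      ultimately show "(x, y) \<in> ?G -` ?E \<inter> space ?B"
        by (simp add: space_pair_measure)
    qed
  qed
  also have "\<dots> = emeasure (Phi_tilde cantor_dist shift a b 1 1 1 ?B) ?E"
    unfolding Phi by (rule emeasure_distr[OF G E, symmetric])
  finally show ?thesis .
qed

lemma wasserstein_Phi_tilde_diagonal_product_pos: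
  assumes "a 1 = (\<lambda>_. False)" "b 1 = (\<lambda>_. False)" "0 < p"
  shows "0 < wasserstein (eucl_dist (arr_keys 1 1 1)) p
    (Phi_tilde cantor_dist shift a b 1 1 1 (diagonal_measure bern_meas))
    (Phi_tilde cantor_dist shift a b 1 1 1 (bern_meas \<Otimes>\<^sub>M bern_meas))"
proof (rule wasserstein_pos_if_separated)
  let ?K = "PiM (arr_keys 1 1 1) (\<lambda>_. borel :: real measure)"
  let ?E = "{u \<in> space ?K. u [0,1,0,0,1] \<noteq> u [1,1,0,0,1]}"
  let ?F = "{u \<in> space ?K. 1/4 \<le> u [0,1,0,0,1] - u [1,1,0,0,1]}"
  show "?E \<in> sets (Phi_tilde cantor_dist shift a b 1 1 1 (diagonal_measure bern_meas))"
    unfolding sets_Phi_tilde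
    by (intro borel_measurable_neq measurable_anchor_component_X measurable_anchor_component_Y)
  show "?F \<in> sets (Phi_tilde cantor_dist shift a b 1 1 1 (bern_meas \<Otimes>\<^sub>M bern_meas))"
    unfolding sets_Phi_tilde by measurable
  show "emeasure (Phi_tilde cantor_dist shift a b 1 1 1 (diagonal_measure bern_meas)) ?E = 0"
    using assms(1,2) by (intro emeasure_Phi_tilde_diagonal) simp
  show "0 < emeasure (Phi_tilde cantor_dist shift a b 1 1 1 (bern_meas \<Otimes>\<^sub>M bern_meas)) ?F"
    using emeasure_Phi_tilde_product[of a b, OF assms(1,2)] by (rule order.strict_trans2[rotated]) simp
  fix u v
  assume "u \<in> space (Phi_tilde cantor_dist shift a b 1 1 1 (diagonal_measure bern_meas)) - ?E"
    and "v \<in> ?F"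
  then have "u [0,1,0,0,1] = u [1,1,0,0,1]" "1/4 \<le> v [0,1,0,0,1] - v [1,1,0,0,1]"
    by (simp_all add: sets_eq_imp_space_eq[OF sets_Phi_tilde])
  then show "(1/4) / 2 \<le> eucl_dist (arr_keys 1 1 1) u v"
    by (intro eucl_dist_ge_half_gap) (unfold arr_keys_1_1_1, simp_all)
qed (use assms(3) in simp_all)

theorem proposition22:
  fixes a b :: "nat \<Rightarrow> bseq" and p :: real
  assumes "dense_anchors cantor_dist a" and "dense_anchors cantor_dist b"
    and "a 1 = (\<lambda>_. False)" and "b 1 = (\<lambda>_. False)"
    and "p \<ge> 1"
  shows "Dep_tilde bern_meas shift cantor_dist a b 1 1 1 p > 0"
proof -
  have "0 < wasserstein (eucl_dist (arr_keys 1 1 1)) p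
      (Phi_tilde cantor_dist shift a b 1 1 1 (diagonal_measure bern_meas))
      (Phi_tilde cantor_dist shift a b 1 1 1 (bern_meas \<Otimes>\<^sub>M bern_meas))"
    using assms(3-5) by (intro wasserstein_Phi_tilde_diagonal_product_pos) simp_all
  also have "\<dots> \<le> Dep_tilde bern_meas shift cantor_dist a b 1 1 1 p"
    unfolding Dep_tilde_def
    by (intro SUP_upper diagonal_in_joinings prob_space_bern_meas measurable_shift distr_shift_bern_meas)
  finally show ?thesis .
qed

end
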